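(* Let $\vec X\in\underline V^h$ with $|\vec X_\rho|>0$ a.e. on $I$, and let $\kappa\in V^h$ be such that $$\big(\kappa\,\vec\nu,\vec\eta\,|\vec X_\rho|\big)^h+\big(\vec X_\rho,\vec\eta_\rho|\vec X_\rho|^{-1}\big)=-\sum_{i=1}^2\sum_{p\in\partial_iI}\widehat\varrho^{(p)}\,\vec\eta(p)\cdot\vec e_{3-i}\qquad\forall\,\vec\eta\in\underline V^h_\partial .$$ Let $\vec h_j=\vec X(q_j)-\vec X(q_{j-1})$ for $j=1,\dots,J$, and $\vec h_0=\vec h_J$ if $\partial I=\emptyset$. Then $|\vec h_j|=|\vec h_{j-1}|$ whenever $\vec h_j$ and $\vec h_{j-1}$ are not parallel, for $j=1,\dots,J$ if $\partial I=\emptyset$ and for $j=2,\dots,J$ if $\partial I\neq\emptyset$.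
   Context: Setup. $\vec e_1=(1,0)^T$, $\vec e_2=(0,1)^T$; "$\cdot$" is the Euclidean inner product. $I$ is either the periodic interval $\mathbb R/\mathbb Z$ (with $\partial I=\emptyset$) or $I=(0,1)$ (with $\partial I=\{0,1\}$). $\partial I=\partial_DI\cup\partial_0I\cup\partial_1I\cup\partial_2I$ is a given disjoint partition, and $\widehat\varrho^{(p)}\in\mathbb R$, $p\in\{0,1\}$, are given constants. Let $J\ge3$, $h=1/J$, $q_j=jh$ ($j=0,\dots,J$; $q_0=q_J$ identified in the periodic case). $V^h$ is the space of continuous functions on $\overline I$ (periodic if $I=\mathbb R/\mathbb Z$) that are affine on each $[q_{j-1},q_j]$; $\underline V^h=[V^h]^2$; $\underline V^h_\partial=\{\vec\eta\in\underline V^h:\vec\eta(\rho)\cdot\vec e_1=0\ \forall\rho\in\partial_0I;\ \vec\eta(\rho)\cdot\vec e_i=0\ \forall\rho\in\partial_iI,\ i=1,2;\ \vec\eta(\rho)=\vec0\ \forall\rho\in\partial_DI\}$. $(\cdot,\cdot)$ is the $L^2(I)$ inner product, and for piecewise continuous $f,g$ the mass-lumped product is $(f,g)^h=\tfrac h2\sum_{j=1}^J[(fg)(q_j^-)+(fg)(q_{j-1}^+)]$. $\vec\nu=-[\vec X_\rho]^\perp/|\vec X_\rho|$ (piecewise constant), where $(a,b)^\perp=(b,-a)$. *)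

theory Defs
  imports "HOL-Analysis.Analysis"
begin

text \<open>Finite element functions in V^h are represented by their nodal values
  f 0, ..., f J (values beyond J are normalised to 0; in the periodic case
  f J = f 0, since q_0 and q_J are identified). Element j (j = 1..J) is
  [q_(j-1), q_j]; on it the affine function has one-sided nodal values
  f(q_(j-1)^+) = f (j-1) and f(q_j^-) = f j.\<close>

type_synonym vec2 = "real^2"

definition e1 :: vec2 where "e1 = axis 1 1"
definition e2 :: vec2 where "e2 = axis 2 1"

definition perp :: "vec2 \<Rightarrow> vec2" where
  "perp v = (\<chi> i. if i = 1 then v $ 2 else - (v $ 1))"

definition hstep :: "nat \<Rightarrow> real" where "hstep J = 1 / real J"

definition Vh :: "bool \<Rightarrow> nat \<Rightarrow> (nat \<Rightarrow> real) set" where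
  "Vh per J = {f. (per \<longrightarrow> f J = f 0) \<and> (\<forall>j>J. f j = 0)}"

definition Vh2 :: "bool \<Rightarrow> nat \<Rightarrow> (nat \<Rightarrow> vec2) set" where
  "Vh2 per J = {f. (per \<longrightarrow> f J = f 0) \<and> (\<forall>j>J. f j = 0)}"

text \<open>Which part of the boundary partition an endpoint of (0,1) belongs to:
  \<partial>_D I, \<partial>_0 I, \<partial>_1 I or \<partial>_2 I.\<close>
datatype bc = BC_D | BC_0 | BC_1 | BC_2

fun bc_ok :: "bc \<Rightarrow> vec2 \<Rightarrow> bool" where
  "bc_ok BC_D v = (v = 0)"
| "bc_ok BC_0 v = (v \<bullet> e1 = 0)"
| "bc_ok BC_1 v = (v \<bullet> e1 = 0)"
| "bc_ok BC_2 v = (v \<bullet> e2 = 0)"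

text \<open>The test space V^h_\<partial>; bc0 / bc1 give the part of the partition containing
  the endpoint 0 / 1 (only relevant when per = False, i.e. I = (0,1)).\<close>
definition Vh2_bd :: "bool \<Rightarrow> nat \<Rightarrow> bc \<Rightarrow> bc \<Rightarrow> (nat \<Rightarrow> vec2) set" where
  "Vh2_bd per J bc0 bc1 =
     {eta \<in> Vh2 per J. \<not> per \<longrightarrow> bc_ok bc0 (eta 0) \<and> bc_ok bc1 (eta J)}"

definition drho :: "nat \<Rightarrow> (nat \<Rightarrow> vec2) \<Rightarrow> nat \<Rightarrow> vec2" where
  "drho J f j = (1 / hstep J) *\<^sub>R (f j - f (j - 1))"

definition nuh :: "nat \<Rightarrow> (nat \<Rightarrow> vec2) \<Rightarrow> nat \<Rightarrow> vec2" where
  "nuh J X j = - ((1 / norm (drho J X j)) *\<^sub>R perp (drho J X j))"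

text \<open>Mass-lumped product of a piecewise continuous integrand, given through
  F j k = value of the integrand on element j at its node k (k = j-1 or j):
  (f,g)^h = h/2 sum_j [(fg)(q_j^-) + (fg)(q_(j-1)^+)].\<close>
definition lumped :: "nat \<Rightarrow> (nat \<Rightarrow> nat \<Rightarrow> real) \<Rightarrow> real" where
  "lumped J F = hstep J / 2 * (\<Sum>j\<in>{1..J}. F j j + F j (j - 1))"

definition pc_integral :: "nat \<Rightarrow> (nat \<Rightarrow> real) \<Rightarrow> real" where
  "pc_integral J c = (\<Sum>j\<in>{1..J}. hstep J * c j)"

text \<open>Contribution rho^(p) eta(p).e_(3-i) of an endpoint p in \<partial>_i I (i = 1,2).\<close>
fun bd_term :: "bc \<Rightarrow> real \<Rightarrow> vec2 \<Rightarrow> real" where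
  "bd_term BC_1 r v = r * (v \<bullet> e2)"
| "bd_term BC_2 r v = r * (v \<bullet> e1)"
| "bd_term BC_D r v = 0"
| "bd_term BC_0 r v = 0"

definition bd_sum :: "bool \<Rightarrow> nat \<Rightarrow> bc \<Rightarrow> bc \<Rightarrow> real \<Rightarrow> real \<Rightarrow> (nat \<Rightarrow> vec2) \<Rightarrow> real" where
  "bd_sum per J bc0 bc1 r0 r1 eta =
     (if per then 0 else bd_term bc0 r0 (eta 0) + bd_term bc1 r1 (eta J))"

definition hvec :: "nat \<Rightarrow> (nat \<Rightarrow> vec2) \<Rightarrow> nat \<Rightarrow> vec2" where
  "hvec J X j = (if j = 0 then X J - X (J - 1) else X j - X (j - 1))"

definition parallel :: "vec2 \<Rightarrow> vec2 \<Rightarrow> bool" where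
  "parallel u v \<longleftrightarrow> (\<exists>c::real. u = c *\<^sub>R v \<or> v = c *\<^sub>R u)"

end

theory Submission
  imports Defs
begin

text \<open>Test the weak equation with a vector \<open>v\<close> placed at a single node, where the edges
  \<open>A = h_(j-1)\<close> and \<open>B = h_j\<close> meet. The lumped curvature term becomes
  \<open>-\<kappa>/2 (A + B)\<^sup>\<perp> \<cdot> v\<close> and the stiffness term \<open>A \<cdot> v/|A| - B \<cdot> v/|B|\<close>. For \<open>v = A + B\<close>
  the curvature term vanishes, leaving \<open>(|A| - |B|) (|A| |B| - A \<cdot> B) = 0\<close>; if \<open>A\<close> and \<open>B\<close>
  are not parallel, the Cauchy-Schwarz inequality is strict and so \<open>|A| = |B|\<close>.\<close>

lemma perp_zero [simp]: "perp 0 = 0"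
  by (simp add: perp_def vec_eq_iff)

lemma perp_add: "perp (x + y) = perp x + perp y"
  by (simp add: perp_def vec_eq_iff)

lemma perp_scaleR: "perp (c *\<^sub>R x) = c *\<^sub>R perp x"
  by (simp add: perp_def vec_eq_iff)

lemma inner_perp_self [simp]: "perp x \<bullet> x = 0"
  by (simp add: perp_def inner_vec_def sum_2)

lemma drho_eq: "drho J f j = real J *\<^sub>R (f j - f (j - 1))"
  by (simp add: drho_def hstep_def)

lemma hstep_mult_J: "J \<ge> 1 \<Longrightarrow> hstep J * real J = 1"
  by (simp add: hstep_def)

text \<open>No positivity of \<open>|X_\<rho>|\<close> is needed here: on a degenerate element both sides are \<open>0\<close>.\<close>
lemma nuh_inner_mult_norm: "(nuh J X j \<bullet> w) * norm (drho J X j) = - (perp (drho J X j) \<bullet> w)"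
  by (cases "drho J X j = 0") (simp_all add: nuh_def)

lemma sum_eq_two_terms:
  assumes "finite S" "a \<in> S" "b \<in> S" "a \<noteq> b" "\<And>j. j \<in> S - {a, b} \<Longrightarrow> f j = 0"
  shows "sum f S = f a + f b"
proof -
  have "sum f S = sum f {a, b}"
    using assms by (intro sum.mono_neutral_right) auto
  with assms(4) show ?thesis by simp
qed

lemma norm_eq_if_not_parallel:
  fixes A B :: vec2
  assumes balance: "A \<bullet> (A + B) / norm A = B \<bullet> (A + B) / norm B"
    and not_par: "\<not> parallel B A"
  shows "norm B = norm A"
proof -
  have "A \<noteq> 0" "B \<noteq> 0"
    using not_par unfolding parallel_def by (metis scaleR_zero_left scaleR_zero_right)+
  then have pos: "norm A > 0" "norm B > 0" by auto
  have "norm B * (A \<bullet> A + A \<bullet> B) = norm A * (B \<bullet> A + B \<bullet> B)"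
    using balance pos by (simp add: inner_add_right field_simps)
  then have factored: "(norm A - norm B) * (norm A * norm B - A \<bullet> B) = 0"
    by (simp add: inner_commute power2_norm_eq_inner[symmetric] algebra_simps power2_eq_square)
  have "A \<bullet> B \<noteq> norm A * norm B"
  proof
    assume "A \<bullet> B = norm A * norm B"
    then have aligned: "norm A *\<^sub>R B = norm B *\<^sub>R A" by (simp add: norm_cauchy_schwarz_eq)
    have "B = (1 / norm A) *\<^sub>R (norm A *\<^sub>R B)" using pos by simp
    also have "\<dots> = (norm B / norm A) *\<^sub>R A" by (simp add: aligned)
    finally show False using not_par unfolding parallel_def by blast
  qed
  with factored show ?thesis by simp
qed

text \<open>Element \<open>p\<close> ends and element \<open>q\<close> begins at the node carrying \<open>v\<close>; in the periodic
  case this node has the two indices \<open>0\<close> and \<open>J\<close>.\<close>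
definition node_test :: "nat \<Rightarrow> nat \<Rightarrow> nat \<Rightarrow> vec2 \<Rightarrow> (nat \<Rightarrow> vec2) \<Rightarrow> bool" where
  "node_test J p q v eta \<longleftrightarrow> p \<in> {1..J} \<and> q \<in> {1..J} \<and> p \<noteq> q \<and>
     eta p = v \<and> eta (p - 1) = 0 \<and> eta q = 0 \<and> eta (q - 1) = v \<and>
     (\<forall>j \<in> {1..J} - {p, q}. eta j = 0 \<and> eta (j - 1) = 0)"

lemma node_test_interior:
  assumes "1 \<le> m" "m < J"
  shows "node_test J m (m + 1) v (\<lambda>k. if k = m then v else 0)"
  using assms unfolding node_test_def by auto

lemma node_test_periodic:
  assumes "J \<ge> 2"
  shows "node_test J J 1 v (\<lambda>k. if k = 0 \<or> k = J then v else 0)"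
  using assms unfolding node_test_def by auto

lemma lumped_node_test:
  fixes X :: "nat \<Rightarrow> vec2" and kappa :: "nat \<Rightarrow> real"
  assumes test: "node_test J p q v eta" and kappa_node: "kappa (q - 1) = kappa p"
  shows "lumped J (\<lambda>j k. kappa k * (nuh J X j \<bullet> eta k) * norm (drho J X j))
       = - kappa p / 2 * (perp (X p - X (p - 1) + (X q - X (q - 1))) \<bullet> v)"
proof -
  let ?F = "\<lambda>j k. kappa k * (nuh J X j \<bullet> eta k) * norm (drho J X j)"
  have J: "J \<ge> 1" using test by (auto simp: node_test_def)
  have F_node: "?F j k = - real J * kappa k * (perp (X j - X (j - 1)) \<bullet> eta k)" for j k
  proof -
    have "?F j k = kappa k * ((nuh J X j \<bullet> eta k) * norm (drho J X j))"
      by (simp only: mult.assoc)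
    also have "\<dots> = - kappa k * (perp (drho J X j) \<bullet> eta k)"
      by (simp only: nuh_inner_mult_norm mult_minus_right)
    finally show ?thesis
      by (simp add: drho_eq perp_scaleR)
  qed
  have "(\<Sum>j\<in>{1..J}. ?F j j + ?F j (j - 1)) = (?F p p + ?F p (p - 1)) + (?F q q + ?F q (q - 1))"
    using test by (intro sum_eq_two_terms) (auto simp: node_test_def)
  also have "\<dots> = - real J * kappa p * (perp (X p - X (p - 1) + (X q - X (q - 1))) \<bullet> v)"
    unfolding F_node using test kappa_node
    by (simp add: node_test_def perp_add inner_add_left distrib_left)
  finally show ?thesis
    using hstep_mult_J[OF J] by (simp add: lumped_def)
qed

lemma pc_integral_node_test:
  fixes X :: "nat \<Rightarrow> vec2"
  assumes test: "node_test J p q v eta"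
  defines "A \<equiv> X p - X (p - 1)" and "B \<equiv> X q - X (q - 1)"
  shows "pc_integral J (\<lambda>j. drho J X j \<bullet> ((1 / norm (drho J X j)) *\<^sub>R drho J eta j))
       = A \<bullet> v / norm A - B \<bullet> v / norm B"
proof -
  let ?g = "\<lambda>j. hstep J * (drho J X j \<bullet> ((1 / norm (drho J X j)) *\<^sub>R drho J eta j))"
  have J: "J \<ge> 1" using test by (auto simp: node_test_def)
  have g_elem: "?g j = (X j - X (j - 1)) \<bullet> (eta j - eta (j - 1)) / norm (X j - X (j - 1))" for j
  proof -
    have "real J > 0" using J by simp
    then have "drho J X j \<bullet> ((1 / norm (drho J X j)) *\<^sub>R drho J eta j)
        = real J * ((X j - X (j - 1)) \<bullet> (eta j - eta (j - 1)) / norm (X j - X (j - 1)))"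
      by (simp add: drho_eq del: scaleR_right_diff_distrib)
    then show ?thesis
      using hstep_mult_J[OF J] by (simp add: mult.assoc[symmetric])
  qed
  let ?e = "\<lambda>j. (X j - X (j - 1)) \<bullet> (eta j - eta (j - 1)) / norm (X j - X (j - 1))"
  have "pc_integral J (\<lambda>j. drho J X j \<bullet> ((1 / norm (drho J X j)) *\<^sub>R drho J eta j))
      = (\<Sum>j\<in>{1..J}. ?e j)"
    by (simp only: pc_integral_def g_elem)
  also have "\<dots> = ?e p + ?e q"
    using test by (intro sum_eq_two_terms) (auto simp: node_test_def)
  also have "\<dots> = A \<bullet> v / norm A - B \<bullet> v / norm B"
    using test by (simp add: node_test_def A_def B_def)
  finally show ?thesis .
qed

abbreviation curvature_form :: "nat \<Rightarrow> (nat \<Rightarrow> vec2) \<Rightarrow> (nat \<Rightarrow> real) \<Rightarrow> (nat \<Rightarrow> vec2) \<Rightarrow> real" where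
  "curvature_form J X kappa eta \<equiv>
     lumped J (\<lambda>j k. kappa k * (nuh J X j \<bullet> eta k) * norm (drho J X j))
   + pc_integral J (\<lambda>j. drho J X j \<bullet> ((1 / norm (drho J X j)) *\<^sub>R drho J eta j))"

text \<open>Testing with the chord direction \<open>A + B\<close>, which is orthogonal to \<open>(A + B)\<^sup>\<perp>\<close>, removes
  the curvature term.\<close>
lemma norm_eq_at_node:
  fixes X :: "nat \<Rightarrow> vec2" and kappa :: "nat \<Rightarrow> real" and p q :: nat
  defines "A \<equiv> X p - X (p - 1)" and "B \<equiv> X q - X (q - 1)"
  assumes test: "node_test J p q (A + B) eta" and kappa_node: "kappa (q - 1) = kappa p"
    and weak: "curvature_form J X kappa eta = 0"
    and not_par: "\<not> parallel B A"
  shows "norm B = norm A"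
proof (rule norm_eq_if_not_parallel[OF _ not_par])
  show "A \<bullet> (A + B) / norm A = B \<bullet> (A + B) / norm B"
    using weak lumped_node_test[OF test kappa_node, of X] pc_integral_node_test[OF test, of X]
    by (simp add: A_def B_def)
qed

lemma bc_ok_zero [simp]: "bc_ok b 0"
  by (cases b) simp_all

lemma bd_term_zero [simp]: "bd_term b r 0 = 0"
  by (cases b) simp_all

lemma norm_hvec_eq_interior:
  assumes weak: "\<forall>eta \<in> Vh2_bd per J bc0 bc1.
      curvature_form J X kappa eta = - bd_sum per J bc0 bc1 r0 r1 eta"
    and j: "2 \<le> j" "j \<le> J"
    and not_par: "\<not> parallel (hvec J X j) (hvec J X (j - 1))"
  shows "norm (hvec J X j) = norm (hvec J X (j - 1))"
proof -
  define m where "m = j - 1"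
  have m: "1 \<le> m" "m < J" "j = m + 1" using j by (auto simp: m_def)
  define A where "A = X m - X (m - 1)"
  define B where "B = X (m + 1) - X (m + 1 - 1)"
  have hvec: "hvec J X (j - 1) = A" "hvec J X j = B"
    using m by (auto simp: hvec_def A_def B_def)
  define eta where "eta = (\<lambda>k. if k = m then A + B else 0)"
  have "eta \<in> Vh2_bd per J bc0 bc1" "bd_sum per J bc0 bc1 r0 r1 eta = 0"
    using m by (auto simp: eta_def Vh2_bd_def Vh2_def bd_sum_def)
  with weak have "curvature_form J X kappa eta = 0" by simp
  then have "norm B = norm A"
    unfolding A_def B_def
  proof (rule norm_eq_at_node[rotated 2])
    show "node_test J m (m + 1) (X m - X (m - 1) + (X (m + 1) - X (m + 1 - 1))) eta"
      using node_test_interior[OF m(1,2), of "A + B"] unfolding eta_def A_def B_def .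
    show "\<not> parallel (X (m + 1) - X (m + 1 - 1)) (X m - X (m - 1))"
      using not_par unfolding hvec A_def B_def .
  qed simp
  then show ?thesis unfolding hvec .
qed

lemma norm_hvec_eq_periodic:
  assumes weak: "\<forall>eta \<in> Vh2_bd True J bc0 bc1.
      curvature_form J X kappa eta = - bd_sum True J bc0 bc1 r0 r1 eta"
    and J: "J \<ge> 2" and kappa: "kappa \<in> Vh True J"
    and not_par: "\<not> parallel (hvec J X 1) (hvec J X 0)"
  shows "norm (hvec J X 1) = norm (hvec J X 0)"
proof -
  define A where "A = X J - X (J - 1)"
  define B where "B = X 1 - X (1 - 1)"
  have hvec: "hvec J X 0 = A" "hvec J X 1 = B"
    by (simp_all add: hvec_def A_def B_def)
  define eta where "eta = (\<lambda>k. if k = 0 \<or> k = J then A + B else 0)"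
  have "eta \<in> Vh2_bd True J bc0 bc1"
    by (auto simp: eta_def Vh2_bd_def Vh2_def)
  with weak have "curvature_form J X kappa eta = 0" by (simp add: bd_sum_def)
  then have "norm B = norm A"
    unfolding A_def B_def
  proof (rule norm_eq_at_node[rotated 2])
    show "node_test J J 1 (X J - X (J - 1) + (X 1 - X (1 - 1))) eta"
      using node_test_periodic[OF J, of "A + B"] unfolding eta_def A_def B_def .
    show "kappa (1 - 1) = kappa J"
      using kappa by (simp add: Vh_def)
    show "\<not> parallel (X 1 - X (1 - 1)) (X J - X (J - 1))"
      using not_par unfolding hvec A_def B_def .
  qed
  then show ?thesis unfolding hvec .
qed

theorem mainTheorem8:
  fixes per :: bool and J :: nat and bc0 bc1 :: bc and r0 r1 :: real
    and X :: "nat \<Rightarrow> vec2" and kappa :: "nat \<Rightarrow> real"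
  assumes "J \<ge> 3"
    and "X \<in> Vh2 per J"
    and "\<forall>j\<in>{1..J}. norm (drho J X j) > 0"
    and "kappa \<in> Vh per J"
    and "\<forall>eta \<in> Vh2_bd per J bc0 bc1.
           lumped J (\<lambda>j k. kappa k * (nuh J X j \<bullet> eta k) * norm (drho J X j))
         + pc_integral J (\<lambda>j. drho J X j \<bullet> ((1 / norm (drho J X j)) *\<^sub>R drho J eta j))
         = - bd_sum per J bc0 bc1 r0 r1 eta"
  shows "\<forall>j. ((per \<and> 1 \<le> j \<and> j \<le> J) \<or> (\<not> per \<and> 2 \<le> j \<and> j \<le> J)) \<longrightarrow>
           \<not> parallel (hvec J X j) (hvec J X (j - 1)) \<longrightarrow>
           norm (hvec J X j) = norm (hvec J X (j - 1))"
proof (intro allI impI)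
  fix j
  assume range: "(per \<and> 1 \<le> j \<and> j \<le> J) \<or> (\<not> per \<and> 2 \<le> j \<and> j \<le> J)"
    and not_par: "\<not> parallel (hvec J X j) (hvec J X (j - 1))"
  show "norm (hvec J X j) = norm (hvec J X (j - 1))"
  proof (cases "j \<ge> 2")
    case True
    with range show ?thesis
      using norm_hvec_eq_interior[OF assms(5) _ _ not_par] by blast
  next
    case False
    with range have per: "per" and j: "j = 1" by auto
    from assms(5) per have weak: "\<forall>eta \<in> Vh2_bd True J bc0 bc1.
        curvature_form J X kappa eta = - bd_sum True J bc0 bc1 r0 r1 eta" by simp
    have "norm (hvec J X 1) = norm (hvec J X 0)"
      by (rule norm_hvec_eq_periodic[OF weak]) (use assms(1,4) per j not_par in simp_all)
    with j show ?thesis by simp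
  qed
qed

end
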